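(* There exist constants $c>0$ and $n_0$ with the following property. For any integer $n\ge n_0$, any integer $B\ge1$, any $\eta\in(0,1/2)$ and any $\epsilon\in(0,1)$, there exist a sequence of $n\times n$ matrices $(A(k))_{k\ge0}$ and an initial vector $x(0)\in\mathbb{R}^n$ such that: each $A(k)$ is doubly stochastic with positive diagonal entries and all its positive entries are at least $\eta$; for every integer $k\ge0$ the directed graph $(N,\mathcal{E}(A(kB))\cup\cdots\cup\mathcal{E}(A((k+1)B-1)))$ is strongly connected; and, with $x(k+1)=A(k)x(k)$, whenever $V(x(k))/V(x(0))\le\epsilon$ we have \[k\ge c\,\frac{n^2}{\eta}\,B\log\frac1\epsilon.\]
   Context: $N=\{1,\dots,n\}$. A matrix is doubly stochastic if it is nonnegative with all row and column sums equal to $1$. For a matrix $A=[a_{ij}]$, $\mathcal{E}(A)$ is the set of directed edges $(j,i)$ (including self-edges) with $a_{ij}>0$. For $x\in\mathbb{R}^n$, $\bar x=\frac1n\sum_ix_i$ and $V(x)=\sum_i(x_i-\bar x)^2$. *)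

theory Defs
  imports Complex_Main
begin

text \<open>Matrices of size n are functions nat => nat => real, indices in {..<n}
  (0-based rendering of N = {1..n}); vectors are nat => real.\<close>

definition doubly_stochastic :: "nat \<Rightarrow> (nat \<Rightarrow> nat \<Rightarrow> real) \<Rightarrow> bool" where
  "doubly_stochastic n A \<longleftrightarrow>
     (\<forall>i<n. \<forall>j<n. A i j \<ge> 0) \<and>
     (\<forall>i<n. (\<Sum>j<n. A i j) = 1) \<and>
     (\<forall>j<n. (\<Sum>i<n. A i j) = 1)"

definition edges :: "nat \<Rightarrow> (nat \<Rightarrow> nat \<Rightarrow> real) \<Rightarrow> (nat \<times> nat) set" where
  "edges n A = {(j, i). i < n \<and> j < n \<and> A i j > 0}"

definition strongly_connected :: "nat \<Rightarrow> (nat \<times> nat) set \<Rightarrow> bool" where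
  "strongly_connected n E \<longleftrightarrow> (\<forall>i<n. \<forall>j<n. (i, j) \<in> E\<^sup>*)"

definition mean :: "nat \<Rightarrow> (nat \<Rightarrow> real) \<Rightarrow> real" where
  "mean n x = (\<Sum>i<n. x i) / real n"

definition V :: "nat \<Rightarrow> (nat \<Rightarrow> real) \<Rightarrow> real" where
  "V n x = (\<Sum>i<n. (x i - mean n x)\<^sup>2)"

fun traj :: "nat \<Rightarrow> (nat \<Rightarrow> nat \<Rightarrow> nat \<Rightarrow> real) \<Rightarrow> (nat \<Rightarrow> real) \<Rightarrow> nat \<Rightarrow> (nat \<Rightarrow> real)" where
  "traj n A x0 0 = x0"
| "traj n A x0 (Suc k) = (\<lambda>i. \<Sum>j<n. A k i j * traj n A x0 k j)"

end

theory Submission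
  imports Defs
begin

text \<open>Let \<open>\<omega> = cis (2\<pi>/n)\<close>. Apply the lazy cyclic shift \<open>(1 - \<eta>) I + \<eta> P\<close> at the last step of
  every window of length \<open>B\<close> and the identity otherwise. Every mode \<open>Re (z \<omega>\<^sup>i)\<close> is an eigenvector
  of the shift with eigenvalue \<open>\<mu> = 1 - \<eta> + \<eta> / \<omega>\<close>, so starting from \<open>x(0) = Re (\<omega>\<^sup>i)\<close> the state
  after \<open>k\<close> steps is the mode with \<open>z = \<mu>\<^sup>m\<close>, \<open>m = k div B\<close>, whose variance is \<open>n |\<mu>|\<^sup>2\<^sup>m / 2\<close>.
  Since \<open>|\<mu>|\<^sup>2 = 1 - 2\<eta>(1 - \<eta>)(1 - cos (2\<pi>/n)) \<ge> 1 - 4\<pi>\<^sup>2\<eta>/n\<^sup>2\<close>, the variance falls below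
  \<open>\<epsilon>\<close> times its initial value only after \<open>m \<ge> n\<^sup>2 ln (1/\<epsilon>) / (8\<pi>\<^sup>2\<eta>)\<close> windows; the bound
  \<open>n \<ge> 9\<close> keeps the spectral gap below \<open>1/2\<close>, where \<open>ln (1 - a) \<ge> -2a\<close>.\<close>

lemma power_mod_eq_power:
  fixes w :: "'a :: monoid_mult"
  assumes "w ^ n = 1"
  shows "w ^ (m mod n) = w ^ m"
proof -
  have "w ^ m = (w ^ n) ^ (m div n) * w ^ (m mod n)"
    by (metis div_mult_mod_eq power_add power_mult mult.commute)
  then show ?thesis using assms by simp
qed

lemma Re_power2: "(Re w)\<^sup>2 = (Re (w\<^sup>2) + (cmod w)\<^sup>2) / 2"
proof -
  have "Re (w\<^sup>2) = (Re w)\<^sup>2 - (Im w)\<^sup>2" by (simp add: power2_eq_square)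
  then show ?thesis by (simp add: cmod_power2)
qed

lemma one_minus_cos_le: "1 - cos (x::real) \<le> x\<^sup>2 / 2"
proof -
  have "cos x = 1 - 2 * sin (x/2) ^ 2" using cos_double_sin[of "x/2"] by simp
  moreover have "sin (x/2) ^ 2 \<le> (x/2)^2"
    using abs_sin_x_le_abs_x[of "x/2"] by (metis abs_ge_zero power2_abs power_mono)
  ultimately show ?thesis by (simp add: power_divide)
qed

lemma ln_inverse_le_of_power_le:
  fixes a \<epsilon> :: real
  assumes "0 \<le> a" "a \<le> 1/2" "0 < \<epsilon>" "(1 - a) ^ m \<le> \<epsilon>"
  shows "ln (1 / \<epsilon>) \<le> 2 * a * real m"
proof -
  have "a * (2 * a) \<le> a * 1"
    using assms(1,2) by (intro mult_left_mono) auto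
  then have "- 2 * a \<le> ln (1 - a)"
    using ln_one_minus_pos_lower_bound[OF assms(1,2)] by (simp add: power2_eq_square)
  then have "- 2 * a * real m \<le> real m * ln (1 - a)"
    using mult_left_mono[of "- 2 * a" "ln (1 - a)" "real m"] by (simp add: mult.commute)
  also have "\<dots> = ln ((1 - a) ^ m)"
    using assms(2) by (simp add: ln_realpow)
  also have "\<dots> \<le> ln \<epsilon>"
    using assms by simp
  finally show ?thesis
    using assms(3) by (simp add: ln_div)
qed

lemma cis_neq_1:
  assumes "0 < x" "x < 2 * pi"
  shows "cis x \<noteq> 1"
proof
  assume "cis x = 1"
  then have "cos x = 1" by (metis cis.simps(1) one_complex.simps(1))
  then obtain m :: int where m: "x = real_of_int m * 2 * pi" using cos_one_2pi_int by blast
  then have "0 < real_of_int m" "real_of_int m < 1"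
    using assms pi_gt_zero by (simp_all add: zero_less_mult_iff)
  then show False by simp
qed

lemma eq_Suc_mod_iff:
  assumes "i < n" "j < n"
  shows "i = Suc j mod n \<longleftrightarrow> j = (i + n - 1) mod n"
  using assms by (cases "j = n - 1"; cases i) (auto simp: mod_if)

lemma Suc_mod_neq_self: "n \<ge> 2 \<Longrightarrow> j < n \<Longrightarrow> Suc j mod n \<noteq> j"
  by (cases "Suc j = n") auto

lemma V_cong: "(\<And>i. i < n \<Longrightarrow> x i = y i) \<Longrightarrow> V n x = V n y"
  by (simp add: V_def mean_def)

text \<open>The mean vanishes because \<open>\<Sum> w\<^sup>i = 0\<close>, and \<open>\<Sum> w\<^sup>2\<^sup>i = 0\<close> kills the oscillating part of
  \<open>Re (z w\<^sup>i)\<^sup>2 = (Re (z\<^sup>2 w\<^sup>2\<^sup>i) + |z|\<^sup>2) / 2\<close>.\<close>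

lemma V_Re_root_of_unity_mode:
  fixes w z :: complex
  assumes "w ^ n = 1" "w \<noteq> 1" "w\<^sup>2 \<noteq> 1" "cmod w = 1"
  shows "V n (\<lambda>i. Re (z * w ^ i)) = real n * (cmod z)\<^sup>2 / 2"
proof -
  have sum_w: "(\<Sum>i<n. w ^ i) = 0"
    using assms(1,2) by (simp add: geometric_sum)
  have "(w\<^sup>2) ^ n = 1"
    using assms(1) by (metis power_mult power_mult_distrib mult.commute power_one)
  then have "(\<Sum>i<n. (w\<^sup>2) ^ i) = 0"
    using assms(3) by (simp add: geometric_sum)
  then have sum_w2: "(\<Sum>i<n. (w ^ i)\<^sup>2) = 0"
    by (simp add: power_mult[symmetric] mult.commute)
  have "mean n (\<lambda>i. Re (z * w ^ i)) = Re (z * (\<Sum>i<n. w ^ i)) / real n"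
    by (simp add: mean_def sum_distrib_left)
  then have "mean n (\<lambda>i. Re (z * w ^ i)) = 0"
    by (simp add: sum_w)
  then have "V n (\<lambda>i. Re (z * w ^ i)) = (\<Sum>i<n. (Re (z * w ^ i))\<^sup>2)"
    by (simp add: V_def)
  also have "\<dots> = (\<Sum>i<n. (Re ((z * w ^ i)\<^sup>2) + (cmod z)\<^sup>2) / 2)"
    by (simp only: Re_power2 norm_mult norm_power assms(4) power_one mult_1_right)
  also have "\<dots> = (Re (z\<^sup>2 * (\<Sum>i<n. (w ^ i)\<^sup>2)) + real n * (cmod z)\<^sup>2) / 2"
    by (simp add: sum_divide_distrib[symmetric] sum.distrib sum_distrib_left power_mult_distrib)
  finally show ?thesis by (simp add: sum_w2)
qed

lemma strongly_connected_mono: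
  "E \<subseteq> F \<Longrightarrow> strongly_connected n E \<Longrightarrow> strongly_connected n F"
  unfolding strongly_connected_def using rtrancl_mono by blast

lemma strongly_connected_if_cycle:
  assumes cycle: "\<And>j. j < n \<Longrightarrow> (j, Suc j mod n) \<in> E"
  shows "strongly_connected n E"
proof -
  have walk: "(i, (i + d) mod n) \<in> E\<^sup>*" if "i < n" for i d
  proof (induction d)
    case 0
    then show ?case using that by simp
  next
    case (Suc d)
    have "((i + d) mod n, Suc ((i + d) mod n) mod n) \<in> E"
      using cycle that by simp
    then show ?case using Suc.IH by (simp add: mod_Suc_eq)
  qed
  show ?thesis unfolding strongly_connected_def
  proof (intro allI impI)
    fix i j assume "i < n" "j < n"
    then have "(i + (j + n - i)) mod n = j" by simp
    then show "(i, j) \<in> E\<^sup>*" using walk[OF \<open>i < n\<close>, of "j + n - i"] by simp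
  qed
qed

definition unity_root :: "nat \<Rightarrow> complex" where
  "unity_root n = cis (2 * pi / real n)"

lemma unity_root_pow_n: "n > 0 \<Longrightarrow> unity_root n ^ n = 1"
  by (simp add: unity_root_def DeMoivre)

lemma cmod_unity_root [simp]: "cmod (unity_root n) = 1"
  by (simp add: unity_root_def)

lemma unity_root_neq_1: "n \<ge> 2 \<Longrightarrow> unity_root n \<noteq> 1"
  unfolding unity_root_def by (rule cis_neq_1) (auto simp: field_simps)

lemma unity_root_power2_neq_1: "n \<ge> 3 \<Longrightarrow> (unity_root n)\<^sup>2 \<noteq> 1"
  unfolding unity_root_def DeMoivre by (rule cis_neq_1) (auto simp: field_simps)

lemma V_unity_root_mode:
  "n \<ge> 3 \<Longrightarrow> V n (\<lambda>i. Re (z * unity_root n ^ i)) = real n * (cmod z)\<^sup>2 / 2"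
  by (rule V_Re_root_of_unity_mode)
    (simp_all add: unity_root_pow_n unity_root_neq_1 unity_root_power2_neq_1)

definition lazy_cycle :: "nat \<Rightarrow> real \<Rightarrow> nat \<Rightarrow> nat \<Rightarrow> real" where
  "lazy_cycle n \<eta> i j = (if i = j then 1 - \<eta> else 0) + (if i = Suc j mod n then \<eta> else 0)"

lemma lazy_cycle_mult:
  assumes "i < n"
  shows "(\<Sum>j<n. lazy_cycle n \<eta> i j * x j) = (1 - \<eta>) * x i + \<eta> * x ((i + n - 1) mod n)"
proof -
  have "(\<Sum>j<n. lazy_cycle n \<eta> i j * x j) =
      (\<Sum>j<n. if i = j then (1 - \<eta>) * x j else 0) +
      (\<Sum>j<n. if j = (i + n - 1) mod n then \<eta> * x j else 0)"
    unfolding sum.distrib[symmetric] lazy_cycle_def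
    by (intro sum.cong refl) (simp add: distrib_right eq_Suc_mod_iff[OF assms])
  then show ?thesis using assms by simp
qed

lemma lazy_cycle_doubly_stochastic:
  assumes "0 \<le> \<eta>" "\<eta> \<le> 1"
  shows "doubly_stochastic n (lazy_cycle n \<eta>)"
proof -
  have "(\<Sum>j<n. lazy_cycle n \<eta> i j) = 1" if "i < n" for i
    using lazy_cycle_mult[OF that, of \<eta> "\<lambda>_. 1"] by simp
  moreover have "(\<Sum>i<n. lazy_cycle n \<eta> i j) = 1" if "j < n" for j
    using that by (simp add: lazy_cycle_def sum.distrib)
  ultimately show ?thesis
    using assms by (simp add: doubly_stochastic_def lazy_cycle_def)
qed

lemma lazy_cycle_Suc_mod:
  "n \<ge> 2 \<Longrightarrow> j < n \<Longrightarrow> lazy_cycle n \<eta> (Suc j mod n) j = \<eta>"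
  using Suc_mod_neq_self by (simp add: lazy_cycle_def)

lemma lazy_cycle_admissible:
  assumes "n \<ge> 2" "0 < \<eta>" "\<eta> < 1/2"
  shows "doubly_stochastic n (lazy_cycle n \<eta>)"
    and "i < n \<Longrightarrow> lazy_cycle n \<eta> i i > 0"
    and "i < n \<Longrightarrow> j < n \<Longrightarrow> lazy_cycle n \<eta> i j > 0 \<Longrightarrow> lazy_cycle n \<eta> i j \<ge> \<eta>"
  using assms lazy_cycle_doubly_stochastic[of \<eta> n] Suc_mod_neq_self[OF assms(1), of i]
  by (auto simp: lazy_cycle_def split: if_splits)

lemma lazy_cycle_strongly_connected:
  assumes "n \<ge> 2" "0 < \<eta>"
  shows "strongly_connected n (edges n (lazy_cycle n \<eta>))"
  by (rule strongly_connected_if_cycle)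
    (use assms lazy_cycle_Suc_mod[OF assms(1)] in \<open>simp add: edges_def\<close>)

definition lazy_cycle_eigenvalue :: "real \<Rightarrow> complex \<Rightarrow> complex" where
  "lazy_cycle_eigenvalue \<eta> w = complex_of_real (1 - \<eta>) + complex_of_real \<eta> * inverse w"

lemma lazy_cycle_mult_Re_mode:
  fixes w z :: complex
  assumes "w ^ n = 1" "i < n"
  shows "(\<Sum>j<n. lazy_cycle n \<eta> i j * Re (z * w ^ j))
    = Re (z * lazy_cycle_eigenvalue \<eta> w * w ^ i)"
proof -
  have "w * w ^ (n - 1) = 1"
    using assms by (simp flip: power_Suc)
  then have inverse_w: "w ^ (n - 1) = inverse w"
    by (simp add: inverse_unique)
  have "i + n - 1 = i + (n - 1)"
    using assms(2) by simp
  then have "w ^ ((i + n - 1) mod n) = w ^ i * inverse w"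
    by (simp only: power_mod_eq_power[OF assms(1)] power_add inverse_w)
  then have "z * lazy_cycle_eigenvalue \<eta> w * w ^ i
      = complex_of_real (1 - \<eta>) * (z * w ^ i) + complex_of_real \<eta> * (z * w ^ ((i + n - 1) mod n))"
    by (simp add: lazy_cycle_eigenvalue_def algebra_simps)
  then show ?thesis
    using assms(2) by (simp add: lazy_cycle_mult)
qed

lemma cmod_lazy_cycle_eigenvalue_cis:
  "(cmod (lazy_cycle_eigenvalue \<eta> (cis x)))\<^sup>2 = 1 - 2 * \<eta> * (1 - \<eta>) * (1 - cos x)"
proof -
  have "(cmod (lazy_cycle_eigenvalue \<eta> (cis x)))\<^sup>2 = (1 - \<eta> + \<eta> * cos x)\<^sup>2 + (\<eta> * sin x)\<^sup>2"
    by (simp add: cmod_power2 lazy_cycle_eigenvalue_def)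
  also have "(\<eta> * sin x)\<^sup>2 = \<eta>\<^sup>2 * (1 - (cos x)\<^sup>2)"
    by (simp add: power_mult_distrib sin_squared_eq)
  finally show ?thesis
    by (simp add: power2_eq_square algebra_simps)
qed

definition cycle_schedule :: "nat \<Rightarrow> nat \<Rightarrow> real \<Rightarrow> nat \<Rightarrow> nat \<Rightarrow> nat \<Rightarrow> real" where
  "cycle_schedule n B \<eta> k =
     (if k mod B = B - 1 then lazy_cycle n \<eta> else (\<lambda>i j. of_bool (i = j)))"

lemma cycle_schedule_admissible:
  assumes "n \<ge> 2" "0 < \<eta>" "\<eta> < 1/2"
  shows "doubly_stochastic n (cycle_schedule n B \<eta> k)"
    and "i < n \<Longrightarrow> cycle_schedule n B \<eta> k i i > 0"
    and "i < n \<Longrightarrow> j < n \<Longrightarrow> cycle_schedule n B \<eta> k i j > 0 \<Longrightarrow> cycle_schedule n B \<eta> k i j \<ge> \<eta>"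
  using lazy_cycle_admissible[OF assms] assms(3)
  by (auto simp: cycle_schedule_def doubly_stochastic_def)

lemma cycle_schedule_window_strongly_connected:
  assumes "n \<ge> 2" "0 < \<eta>" "B \<ge> 1"
  shows "strongly_connected n (\<Union>t\<in>{k*B..<(k+1)*B}. edges n (cycle_schedule n B \<eta> t))"
proof (rule strongly_connected_mono[OF _ lazy_cycle_strongly_connected[OF assms(1,2)]])
  let ?t = "B - 1 + k * B"
  have "?t mod B = B - 1"
    using assms(3) by (simp only: mod_mult_self1) simp
  then have "edges n (cycle_schedule n B \<eta> ?t) = edges n (lazy_cycle n \<eta>)"
    by (simp add: cycle_schedule_def)
  moreover have "?t \<in> {k*B..<(k+1)*B}"
    using assms(3) by auto
  ultimately show "edges n (lazy_cycle n \<eta>) \<subseteq> (\<Union>t\<in>{k*B..<(k+1)*B}. edges n (cycle_schedule n B \<eta> t))"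
    by blast
qed

lemma traj_cycle_schedule:
  fixes w :: complex
  assumes "w ^ n = 1" "B \<ge> 1"
  shows "i < n \<Longrightarrow> traj n (cycle_schedule n B \<eta>) (\<lambda>i. Re (w ^ i)) k i
    = Re (lazy_cycle_eigenvalue \<eta> w ^ (k div B) * w ^ i)"
proof (induction k arbitrary: i)
  case 0
  then show ?case by simp
next
  case (Suc k)
  let ?\<mu> = "lazy_cycle_eigenvalue \<eta> w"
  have step: "traj n (cycle_schedule n B \<eta>) (\<lambda>i. Re (w ^ i)) (Suc k) i
      = (\<Sum>j<n. cycle_schedule n B \<eta> k i j * Re (?\<mu> ^ (k div B) * w ^ j))"
    unfolding traj.simps using Suc.IH by (intro sum.cong refl) simp
  show ?case
  proof (cases "k mod B = B - 1")
    case True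
    then have "cycle_schedule n B \<eta> k = lazy_cycle n \<eta>"
      by (simp add: cycle_schedule_def)
    then have "traj n (cycle_schedule n B \<eta>) (\<lambda>i. Re (w ^ i)) (Suc k) i
        = Re (?\<mu> ^ (k div B) * ?\<mu> * w ^ i)"
      using step lazy_cycle_mult_Re_mode[OF assms(1) Suc.prems] by (simp only:)
    moreover have "Suc k div B = Suc (k div B)"
      using True assms(2) by (simp add: div_Suc mod_Suc)
    ultimately show ?thesis by (simp only: power_Suc2)
  next
    case False
    then have "Suc k div B = k div B"
      using assms(2) by (auto simp: div_Suc mod_Suc)
    moreover have "cycle_schedule n B \<eta> k = (\<lambda>i j. of_bool (i = j))"
      using False by (simp add: cycle_schedule_def)
    ultimately show ?thesis
      using step Suc.prems by simp
  qed
qed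

lemma V_traj_cycle_schedule:
  assumes "n \<ge> 3" "B \<ge> 1"
  shows "V n (traj n (cycle_schedule n B \<eta>) (\<lambda>i. Re (unity_root n ^ i)) k)
    = real n * (1 - 2 * \<eta> * (1 - \<eta>) * (1 - cos (2 * pi / real n))) ^ (k div B) / 2"
proof -
  let ?\<mu> = "lazy_cycle_eigenvalue \<eta> (unity_root n)"
  have "V n (traj n (cycle_schedule n B \<eta>) (\<lambda>i. Re (unity_root n ^ i)) k)
      = V n (\<lambda>i. Re (?\<mu> ^ (k div B) * unity_root n ^ i))"
    using traj_cycle_schedule[OF unity_root_pow_n assms(2)] assms(1) by (intro V_cong) simp
  also have "\<dots> = real n * (cmod (?\<mu> ^ (k div B)))\<^sup>2 / 2"
    by (rule V_unity_root_mode[OF assms(1)])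
  also have "(cmod (?\<mu> ^ (k div B)))\<^sup>2 = ((cmod ?\<mu>)\<^sup>2) ^ (k div B)"
    by (simp only: norm_power power_mult[symmetric] mult.commute)
  finally show ?thesis
    by (simp add: unity_root_def cmod_lazy_cycle_eigenvalue_cis)
qed

lemma lazy_cycle_gap_le:
  assumes "0 \<le> \<eta>"
  shows "2 * \<eta> * (1 - \<eta>) * (1 - cos (2 * pi / real n)) \<le> 4 * pi\<^sup>2 * \<eta> / (real n)\<^sup>2"
proof -
  have "2 * \<eta> * (1 - \<eta>) * (1 - cos (2 * pi / real n)) \<le> 2 * \<eta> * (1 - cos (2 * pi / real n))"
    using assms mult_left_le[of "1 - \<eta>" "2 * \<eta>"] by (intro mult_right_mono) auto
  also have "\<dots> \<le> 2 * \<eta> * ((2 * pi / real n)\<^sup>2 / 2)"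
    using assms one_minus_cos_le by (intro mult_left_mono) auto
  finally show ?thesis
    by (simp add: power_divide mult_ac)
qed

lemma cycle_schedule_slow_convergence:
  fixes \<eta> \<epsilon> :: real
  assumes n: "n \<ge> 9" and B: "B \<ge> 1" and \<eta>: "0 < \<eta>" "\<eta> < 1/2" and \<epsilon>: "0 < \<epsilon>"
    and decay: "V n (traj n (cycle_schedule n B \<eta>) x0 k) / V n x0 \<le> \<epsilon>"
    and x0: "x0 = (\<lambda>i. Re (unity_root n ^ i))"
  shows "real k \<ge> 1 / (8 * pi\<^sup>2) * (real n)\<^sup>2 / \<eta> * real B * ln (1 / \<epsilon>)"
proof -
  define m where "m = k div B"
  define a where "a = 2 * \<eta> * (1 - \<eta>) * (1 - cos (2 * pi / real n))"
  have Vk: "V n (traj n (cycle_schedule n B \<eta>) x0 k) = real n * (1 - a) ^ m / 2"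
    using V_traj_cycle_schedule[of n B \<eta> k] n B unfolding x0 a_def m_def by simp
  have V0: "V n x0 = real n / 2"
    using V_unity_root_mode[of n 1] n unfolding x0 by simp
  have power_le: "(1 - a) ^ m \<le> \<epsilon>"
    using decay n unfolding Vk V0 by simp
  have a_le: "a \<le> 4 * pi\<^sup>2 * \<eta> / (real n)\<^sup>2"
    unfolding a_def using \<eta> by (intro lazy_cycle_gap_le) simp
  have "4 * pi\<^sup>2 * \<eta> \<le> 4 * 4\<^sup>2 * (1/2)"
    using \<eta> pi_less_4 by (intro mult_mono power_mono) auto
  moreover have "(9::real)\<^sup>2 \<le> (real n)\<^sup>2"
    using n by (intro power_mono) auto
  ultimately have "4 * pi\<^sup>2 * \<eta> \<le> 1/2 * (real n)\<^sup>2"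
    by (simp add: mult_ac)
  then have "4 * pi\<^sup>2 * \<eta> / (real n)\<^sup>2 \<le> 1/2"
    using n by (subst pos_divide_le_eq) simp_all
  moreover have "0 \<le> a"
    using \<eta> by (simp add: a_def)
  ultimately have "ln (1 / \<epsilon>) \<le> 2 * a * real m"
    using a_le \<epsilon> power_le by (intro ln_inverse_le_of_power_le) auto
  also have "\<dots> \<le> 2 * (4 * pi\<^sup>2 * \<eta> / (real n)\<^sup>2) * real m"
    using a_le by (intro mult_right_mono) auto
  finally have "(real n)\<^sup>2 * ln (1 / \<epsilon>) \<le> 8 * pi\<^sup>2 * \<eta> * real m"
    using n by (simp add: field_simps)
  then have "1 / (8 * pi\<^sup>2) * (real n)\<^sup>2 / \<eta> * real B * ln (1 / \<epsilon>) \<le> real B * real m"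
    using \<eta> B by (simp add: field_simps mult_left_mono)
  also have "real B * real m \<le> real k"
    unfolding m_def of_nat_mult[symmetric] of_nat_le_iff by (rule times_div_less_eq_dividend)
  finally show ?thesis .
qed

theorem proposition2:
  shows "\<exists>(c::real) > 0. \<exists>n0::nat. \<forall>n B (\<eta>::real) (\<epsilon>::real).
     n \<ge> n0 \<and> B \<ge> 1 \<and> 0 < \<eta> \<and> \<eta> < 1/2 \<and> 0 < \<epsilon> \<and> \<epsilon> < 1 \<longrightarrow>
     (\<exists>(A::nat \<Rightarrow> nat \<Rightarrow> nat \<Rightarrow> real) (x0::nat \<Rightarrow> real).
        (\<forall>k. doubly_stochastic n (A k) \<and> (\<forall>i<n. A k i i > 0) \<and>
             (\<forall>i<n. \<forall>j<n. A k i j > 0 \<longrightarrow> A k i j \<ge> \<eta>)) \<and>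
        (\<forall>k. strongly_connected n (\<Union>t\<in>{k*B..<(k+1)*B}. edges n (A t))) \<and>
        (\<forall>k. V n (traj n A x0 k) / V n x0 \<le> \<epsilon> \<longrightarrow>
             real k \<ge> c * (real n)\<^sup>2 / \<eta> * real B * ln (1/\<epsilon>)))"
proof (intro exI[of _ "1 / (8 * pi\<^sup>2)"] conjI exI[of _ 9] allI impI)
  fix n B :: nat and \<eta> \<epsilon> :: real
  assume "9 \<le> n \<and> 1 \<le> B \<and> 0 < \<eta> \<and> \<eta> < 1/2 \<and> 0 < \<epsilon> \<and> \<epsilon> < 1"
  then have n: "n \<ge> 9" and B: "B \<ge> 1" and \<eta>: "0 < \<eta>" "\<eta> < 1/2" and \<epsilon>: "0 < \<epsilon>"
    by auto
  then have "n \<ge> 2" by simp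
  let ?A = "cycle_schedule n B \<eta>" and ?x0 = "\<lambda>i. Re (unity_root n ^ i)"
  have "\<forall>k. doubly_stochastic n (?A k) \<and> (\<forall>i<n. ?A k i i > 0) \<and>
      (\<forall>i<n. \<forall>j<n. ?A k i j > 0 \<longrightarrow> ?A k i j \<ge> \<eta>)"
    using cycle_schedule_admissible[OF \<open>n \<ge> 2\<close> \<eta>] by blast
  moreover have "\<forall>k. strongly_connected n (\<Union>t\<in>{k*B..<(k+1)*B}. edges n (?A t))"
    using cycle_schedule_window_strongly_connected[OF \<open>n \<ge> 2\<close> \<eta>(1) B] by blast
  moreover have "\<forall>k. V n (traj n ?A ?x0 k) / V n ?x0 \<le> \<epsilon> \<longrightarrow>
      real k \<ge> 1 / (8 * pi\<^sup>2) * (real n)\<^sup>2 / \<eta> * real B * ln (1/\<epsilon>)"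
    using cycle_schedule_slow_convergence[OF n B \<eta> \<epsilon> _ refl] by blast
  ultimately show "\<exists>A x0.
      (\<forall>k. doubly_stochastic n (A k) \<and> (\<forall>i<n. A k i i > 0) \<and>
        (\<forall>i<n. \<forall>j<n. A k i j > 0 \<longrightarrow> A k i j \<ge> \<eta>)) \<and>
      (\<forall>k. strongly_connected n (\<Union>t\<in>{k*B..<(k+1)*B}. edges n (A t))) \<and>
      (\<forall>k. V n (traj n A x0 k) / V n x0 \<le> \<epsilon> \<longrightarrow>
        real k \<ge> 1 / (8 * pi\<^sup>2) * (real n)\<^sup>2 / \<eta> * real B * ln (1/\<epsilon>))"
    by blast
qed simp

end
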